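(* Work on $\mathbb{R}^d$ with coordinates $x^\mu$ and smooth fields (non-singular at $x=0$). The map $\omega\mapsto e$ given by $$e^a_\mu(x)=\delta^a_\mu+\int_0^1 \omega^a_{\ b\mu}(tx)\,t\,x^b\,dt,$$ with inverse $e\mapsto\omega$ given by $\omega^a_{\ b}=\tfrac12\left(-e^c\wedge i_b i_a de^c+i_b de^a-i_a de^b\right)$, is a bijection between: (i) the space of spin-connections $\omega^a_{\ b}$ satisfying the Fock–Schwinger gauge condition $x^\mu\omega^a_{\ b\mu}(x)=0$ and the torsionless condition $de^a+\omega^a_{\ b}\wedge e^b=0$, where $e^a_\mu(x)=\delta^a_\mu+\int_0^1 \omega^a_{\ b\mu}(tx)\,t\,x^b\,dt$; (ii) the space of vielbeins $e^a=e^a_\mu dx^\mu$ satisfying $$x^\mu e^a_\mu(x)=x^a,\qquad x^a e^a_\mu(x)=x^\mu,\qquad i_a\mathcal L_{\mathfrak r}e^b=i_b\mathcal L_{\mathfrak r}e^a .$$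
   Context: Latin indices $a,b,c\in\{1,\dots,d\}$ are frame indices, Greek indices coordinate indices; frame indices are raised/lowered with $\delta_{ab}$, repeated indices summed, and $x^a=\delta^a_\mu x^\mu$. Spin-connections $\omega^a_{\ b}=\omega^a_{\ b\mu}dx^\mu$ are $\mathfrak{so}(d)$-valued 1-forms. A vielbein is a coframe $e^a=e^a_\mu dx^\mu$ (invertible matrix $e^a_\mu$); its dual vector fields are $e_a=e_a^{\ \mu}\partial_\mu$ with $e^a_\mu e_a^{\ \nu}=\delta^\nu_\mu$, and $i_a$ is the interior product with $e_a$. $\mathfrak r=x^\mu\partial_\mu$ is the radial vector field and $\mathcal L_{\mathfrak r}$ the Lie derivative along it (on a $p$-form, $(\mathcal L_{\mathfrak r}\sigma)_{\mu_1\dots\mu_p}=(x^\nu\partial_\nu+p)\sigma_{\mu_1\dots\mu_p}$). Conventions: $(d\omega)_{\mu_1\dots\mu_{p+1}}=(p+1)\partial_{[\mu_1}\omega_{\mu_2\dots\mu_{p+1}]}$, $(\omega\wedge\sigma)_{\mu_1\dots\mu_{p+q}}=\frac{(p+q)!}{p!q!}\omega_{[\mu_1\dots\mu_p}\sigma_{\mu_{p+1}\dots\mu_{p+q}]}$, $(i_X\omega)_{\mu_2\dots\mu_p}=X^{\mu_1}\omega_{\mu_1\dots\mu_p}$.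
   Formalization: In space (i), the coframe $e^a_\mu$ obtained from $\omega^a_{\ b}$ by the integral formula must also be a vielbein, that is, smooth with the matrix $e^a_\mu(x)$ invertible at every x. Apart from conventions, each condition added here is assumed in the paper as well or is needed for the statement above to hold. *)

theory Defs
  imports "HOL-Analysis.Analysis"
begin

text \<open>Fields on R^d, d = CARD('n). Frame and coordinate indices both range over 'n.
  A spin-connection is given by components omega a b mu x; a vielbein by e a mu x.\<close>

type_synonym 'n conn = "'n \<Rightarrow> 'n \<Rightarrow> 'n \<Rightarrow> real^'n \<Rightarrow> real"
type_synonym 'n frame = "'n \<Rightarrow> 'n \<Rightarrow> real^'n \<Rightarrow> real"

definition pd :: "'n::finite \<Rightarrow> (real^'n \<Rightarrow> real) \<Rightarrow> real^'n \<Rightarrow> real" where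
  "pd i f x = frechet_derivative f (at x) (axis i 1)"

fun Ck :: "nat \<Rightarrow> (real^'n::finite \<Rightarrow> real) \<Rightarrow> bool" where
  "Ck 0 f = continuous_on UNIV f"
| "Ck (Suc k) f = (f differentiable_on UNIV \<and> (\<forall>i. Ck k (pd i f)))"

definition smooth :: "(real^'n::finite \<Rightarrow> real) \<Rightarrow> bool" where
  "smooth f = (\<forall>k. Ck k f)"

definition vmat :: "'n::finite frame \<Rightarrow> real^'n \<Rightarrow> real^'n^'n" where
  "vmat e x = (\<chi> a mu. e a mu x)"

definition is_vielbein :: "'n::finite frame \<Rightarrow> bool" where
  "is_vielbein e = ((\<forall>a mu. smooth (e a mu)) \<and> (\<forall>x. invertible (vmat e x)))"

text \<open>Dual vector fields e_a^mu, so that sum_a e^a_mu e_a^nu = delta.\<close>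
definition inv_frame :: "'n::finite frame \<Rightarrow> 'n \<Rightarrow> 'n \<Rightarrow> real^'n \<Rightarrow> real" where
  "inv_frame e a mu x = matrix_inv (vmat e x) $ mu $ a"

definition dform :: "'n::finite frame \<Rightarrow> 'n \<Rightarrow> 'n \<Rightarrow> 'n \<Rightarrow> real^'n \<Rightarrow> real" where
  "dform e a mu nu x = pd mu (e a nu) x - pd nu (e a mu) x"

definition spin_connection :: "'n::finite conn \<Rightarrow> bool" where
  "spin_connection \<omega> = ((\<forall>a b mu. smooth (\<omega> a b mu)) \<and>
      (\<forall>a b mu x. \<omega> a b mu x = - \<omega> b a mu x))"

definition FS_gauge :: "'n::finite conn \<Rightarrow> bool" where
  "FS_gauge \<omega> = (\<forall>a b x. (\<Sum>mu\<in>UNIV. x $ mu * \<omega> a b mu x) = 0)"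

definition e_of :: "'n::finite conn \<Rightarrow> 'n frame" where
  "e_of \<omega> a mu x = (if a = mu then 1 else 0) +
      integral {0..1} (\<lambda>t. \<Sum>b\<in>UNIV. \<omega> a b mu (t *\<^sub>R x) * t * x $ b)"

definition torsionless :: "'n::finite conn \<Rightarrow> 'n frame \<Rightarrow> bool" where
  "torsionless \<omega> e = (\<forall>a mu nu x. dform e a mu nu x +
      (\<Sum>b\<in>UNIV. \<omega> a b mu x * e b nu x - \<omega> a b nu x * e b mu x) = 0)"

definition lie_r :: "'n::finite frame \<Rightarrow> 'n \<Rightarrow> 'n \<Rightarrow> real^'n \<Rightarrow> real" where
  "lie_r e b mu x = (\<Sum>nu\<in>UNIV. x $ nu * pd nu (e b mu) x) + e b mu x"

definition iL :: "'n::finite frame \<Rightarrow> 'n \<Rightarrow> 'n \<Rightarrow> real^'n \<Rightarrow> real" where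
  "iL e a b x = (\<Sum>mu\<in>UNIV. inv_frame e a mu x * lie_r e b mu x)"

definition omega_of :: "'n::finite frame \<Rightarrow> 'n conn" where
  "omega_of e a b mu x = 1/2 * (
      - (\<Sum>c\<in>UNIV. e c mu x *
           (\<Sum>nu\<in>UNIV. \<Sum>rho\<in>UNIV. inv_frame e b nu x * inv_frame e a rho x * dform e c rho nu x))
      + (\<Sum>nu\<in>UNIV. inv_frame e b nu x * dform e a nu mu x)
      - (\<Sum>nu\<in>UNIV. inv_frame e a nu x * dform e b nu mu x))"

definition space_i :: "'n::finite conn \<Rightarrow> bool" where
  "space_i \<omega> = (spin_connection \<omega> \<and> FS_gauge \<omega> \<and> is_vielbein (e_of \<omega>) \<and>
      torsionless \<omega> (e_of \<omega>))"

definition space_ii :: "'n::finite frame \<Rightarrow> bool" where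
  "space_ii e = (is_vielbein e \<and>
      (\<forall>a x. (\<Sum>mu\<in>UNIV. x $ mu * e a mu x) = x $ a) \<and>
      (\<forall>mu x. (\<Sum>a\<in>UNIV. x $ a * e a mu x) = x $ mu) \<and>
      (\<forall>a b x. iL e a b x = iL e b a x))"

end

theory Submission
  imports Defs
begin

text \<open>
  At every point the torsion equation de^a + omega^a_b wedge e^b = 0 has exactly one
  so(d)-valued solution, given in the frame by the Koszul formula
  omega_ab(e_k) = (C_abk - C_bak - C_kab) / 2, where C_cab = de^c(e_a, e_b) are the
  anholonomy coefficients; omega_of is this formula. Differentiating the radial conditions
  i_r e^a = x^a and x^a e^a = x_mu dx^mu expresses i_r de^a and x^c de^c through L_r e and e,
  and contracting the Koszul formula with x then gives
  2 x^mu omega_ab,mu = i_a L_r e^b - i_b L_r e^a: the Fock-Schwinger gauge is equivalent to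
  the symmetry condition. Under torsion and gauge, Cartan's formula gives
  (L_r e^a)_mu = delta^a_mu + omega^a_b,mu x^b, and since (L_r e)(t x) = d/dt (t e(t x)),
  integrating along the ray recovers e from omega. Conversely, for e = e_of omega the
  radial conditions follow from the gauge condition and the antisymmetry of omega.
\<close>

lemma sum_swap3:
  "(\<Sum>k\<in>A. \<Sum>i\<in>B. \<Sum>j\<in>C. f k i j) = (\<Sum>i\<in>B. \<Sum>j\<in>C. \<Sum>k\<in>A. f k i j)"
proof -
  have "(\<Sum>k\<in>A. \<Sum>i\<in>B. \<Sum>j\<in>C. f k i j) = (\<Sum>i\<in>B. \<Sum>k\<in>A. \<Sum>j\<in>C. f k i j)"
    by (rule sum.swap)
  also have "\<dots> = (\<Sum>i\<in>B. \<Sum>j\<in>C. \<Sum>k\<in>A. f k i j)"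
    by (rule sum.cong[OF refl], rule sum.swap)
  finally show ?thesis .
qed

lemma sum_antisym_quadratic:
  fixes w :: "'a \<Rightarrow> 'a \<Rightarrow> 'b::linordered_idom"
  assumes "\<And>a b. w a b = - w b a"
  shows "(\<Sum>a\<in>A. \<Sum>b\<in>A. z a * z b * w a b) = 0"
proof -
  have "(\<Sum>a\<in>A. \<Sum>b\<in>A. z a * z b * w a b) = (\<Sum>b\<in>A. \<Sum>a\<in>A. z a * z b * w a b)"
    by (rule sum.swap)
  also have "\<dots> = - (\<Sum>a\<in>A. \<Sum>b\<in>A. z a * z b * w a b)"
    by (subst assms) (simp add: sum_negf mult_ac)
  finally show ?thesis
    by simp
qed

lemma sum_mult_delta: "(\<Sum>a\<in>UNIV. f a * (if a = b then 1 else 0)) = f b"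
  and sum_mult_delta': "(\<Sum>a\<in>UNIV. f a * (if b = a then 1 else 0)) = f b"
  for f :: "'a::finite \<Rightarrow> 'b::semiring_1"
  by (simp_all add: if_distrib[of "\<lambda>z. f _ * z"] sum.delta sum.delta' cong: if_cong)

lemma sum_mult_integral:
  fixes f :: "'i \<Rightarrow> real \<Rightarrow> real"
  assumes "finite I" and "\<And>i. i \<in> I \<Longrightarrow> continuous_on {a..b} (f i)"
  shows "(\<Sum>i\<in>I. c i * integral {a..b} (f i)) = integral {a..b} (\<lambda>t. \<Sum>i\<in>I. c i * f i t)"
  using assms by (simp add: integral_sum integrable_continuous_interval integrable_on_mult_right)

section \<open>Partial derivatives and smooth functions\<close>

lemma differentiable_on_UNIV_has_derivative:
  "f differentiable_on UNIV \<Longrightarrow> (f has_derivative frechet_derivative f (at x)) (at x)"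
  by (simp add: differentiable_on_def frechet_derivative_works)

lemma pd_eq_derivative: "(f has_derivative f') (at x) \<Longrightarrow> pd i f x = f' (axis i 1)"
  unfolding pd_def using frechet_derivative_at by metis

lemma has_derivative_eq_sum_pd:
  assumes "(f has_derivative f') (at y)"
  shows "f' v = (\<Sum>nu\<in>UNIV. v $ nu * pd nu f y)"
proof -
  have lin: "linear f'" using has_derivative_linear[OF assms] .
  have "f' v = f' (\<Sum>nu\<in>UNIV. v $ nu *\<^sub>R axis nu 1)"
    using basis_expansion[of v] by (simp add: scalar_mult_eq_scaleR)
  also have "\<dots> = (\<Sum>nu\<in>UNIV. v $ nu * f' (axis nu 1))"
    by (simp add: real_vector.linear_sum[OF lin] linear_cmul[OF lin])
  finally show ?thesis by (simp add: pd_eq_derivative[OF assms])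
qed

lemma pd_const: "pd i (\<lambda>x. c) = (\<lambda>x. 0)"
  using pd_eq_derivative[OF has_derivative_const] by blast

context
  fixes f g :: "real^'n::finite \<Rightarrow> real"
  assumes f: "f differentiable_on UNIV" and g: "g differentiable_on UNIV"
begin

lemma pd_add: "pd i (\<lambda>x. f x + g x) = (\<lambda>x. pd i f x + pd i g x)"
  using pd_eq_derivative[OF has_derivative_add, OF differentiable_on_UNIV_has_derivative[OF f]
      differentiable_on_UNIV_has_derivative[OF g]]
    pd_eq_derivative[OF differentiable_on_UNIV_has_derivative[OF f]]
    pd_eq_derivative[OF differentiable_on_UNIV_has_derivative[OF g]]
  by auto

lemma pd_mult: "pd i (\<lambda>x. f x * g x) = (\<lambda>x. f x * pd i g x + pd i f x * g x)"
  using pd_eq_derivative[OF has_derivative_mult, OF differentiable_on_UNIV_has_derivative[OF f]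
      differentiable_on_UNIV_has_derivative[OF g]]
    pd_eq_derivative[OF differentiable_on_UNIV_has_derivative[OF f]]
    pd_eq_derivative[OF differentiable_on_UNIV_has_derivative[OF g]]
  by auto

end

lemma pd_uminus: "f differentiable_on UNIV \<Longrightarrow> pd i (\<lambda>x. - f x) = (\<lambda>x. - pd i f x)"
  using pd_eq_derivative[OF has_derivative_minus[OF differentiable_on_UNIV_has_derivative]]
    pd_eq_derivative[OF differentiable_on_UNIV_has_derivative]
  by fastforce

lemma pd_inverse:
  assumes f: "f differentiable_on UNIV" and nz: "\<And>x. f x \<noteq> 0"
  shows "pd i (\<lambda>x. inverse (f x)) = (\<lambda>x. - (inverse (f x) * pd i f x * inverse (f x)))"
proof
  fix x
  show "pd i (\<lambda>x. inverse (f x)) x = - (inverse (f x) * pd i f x * inverse (f x))"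
    using pd_eq_derivative[OF Deriv.has_derivative_inverse[OF nz
        differentiable_on_UNIV_has_derivative[OF f]]]
      pd_eq_derivative[OF differentiable_on_UNIV_has_derivative[OF f]]
    by simp
qed

lemma Ck_SucD: "Ck (Suc k) f \<Longrightarrow> Ck k f"
  by (induction k arbitrary: f) (auto intro: differentiable_imp_continuous_on)

lemma Ck_const: "Ck k (\<lambda>x. c)"
  by (induction k arbitrary: c) (simp_all add: pd_const)

lemma Ck_add: "Ck k f \<Longrightarrow> Ck k g \<Longrightarrow> Ck k (\<lambda>x. f x + g x)"
  by (induction k arbitrary: f g) (auto simp: continuous_on_add pd_add differentiable_on_def)

lemma Ck_uminus: "Ck k f \<Longrightarrow> Ck k (\<lambda>x. - f x)"
  by (induction k arbitrary: f) (auto simp: continuous_on_minus pd_uminus differentiable_on_def)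

lemma Ck_mult: "Ck k f \<Longrightarrow> Ck k g \<Longrightarrow> Ck k (\<lambda>x. f x * g x)"
proof (induction k arbitrary: f g)
  case 0
  then show ?case by (simp add: continuous_on_mult)
next
  case (Suc k)
  then have df: "f differentiable_on UNIV" and dg: "g differentiable_on UNIV" by auto
  have "Ck k (pd i (\<lambda>x. f x * g x))" for i
    unfolding pd_mult[OF df dg]
    using Suc by (intro Ck_add Suc.IH) (auto intro: Ck_SucD)
  with df dg show ?case by (simp add: differentiable_on_def)
qed

lemma Ck_inverse: "Ck k f \<Longrightarrow> (\<And>x. f x \<noteq> 0) \<Longrightarrow> Ck k (\<lambda>x. inverse (f x))"
proof (induction k arbitrary: f)
  case 0
  then show ?case by (auto intro: continuous_on_inverse)
next
  case (Suc k)
  then have df: "f differentiable_on UNIV" by auto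
  have inv: "Ck k (\<lambda>x. inverse (f x))"
    using Suc.IH[OF Ck_SucD] Suc.prems by blast
  have "Ck k (pd i (\<lambda>x. inverse (f x)))" for i
    unfolding pd_inverse[OF df Suc.prems(2)]
    using Suc.prems by (intro Ck_uminus Ck_mult inv) auto
  with df Suc.prems(2) show ?case by (simp add: differentiable_on_def)
qed

lemma smooth_const: "smooth (\<lambda>x. c)"
  by (simp add: smooth_def Ck_const)

lemma smooth_add: "smooth f \<Longrightarrow> smooth g \<Longrightarrow> smooth (\<lambda>x. f x + g x)"
  by (simp add: smooth_def Ck_add)

lemma smooth_uminus: "smooth f \<Longrightarrow> smooth (\<lambda>x. - f x)"
  by (simp add: smooth_def Ck_uminus)

lemma smooth_diff: "smooth f \<Longrightarrow> smooth g \<Longrightarrow> smooth (\<lambda>x. f x - g x)"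
  using smooth_add[of f "\<lambda>x. - g x"] smooth_uminus[of g] by simp

lemma smooth_mult: "smooth f \<Longrightarrow> smooth g \<Longrightarrow> smooth (\<lambda>x. f x * g x)"
  by (simp add: smooth_def Ck_mult)

lemma smooth_inverse: "smooth f \<Longrightarrow> (\<And>x. f x \<noteq> 0) \<Longrightarrow> smooth (\<lambda>x. inverse (f x))"
  by (simp add: smooth_def Ck_inverse)

lemma smooth_sum: "finite S \<Longrightarrow> (\<And>s. s \<in> S \<Longrightarrow> smooth (f s)) \<Longrightarrow> smooth (\<lambda>x. \<Sum>s\<in>S. f s x)"
  by (induction S rule: finite_induct) (simp_all add: smooth_const smooth_add)

lemma smooth_prod: "finite S \<Longrightarrow> (\<And>s. s \<in> S \<Longrightarrow> smooth (f s)) \<Longrightarrow> smooth (\<lambda>x. \<Prod>s\<in>S. f s x)"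
  by (induction S rule: finite_induct) (simp_all add: smooth_const smooth_mult)

lemma smooth_pd: "smooth f \<Longrightarrow> smooth (pd i f)"
  unfolding smooth_def by (metis Ck.simps(2))

lemma smooth_imp_differentiable: "smooth f \<Longrightarrow> f differentiable_on UNIV"
  unfolding smooth_def by (metis Ck.simps(2))

lemma smooth_imp_continuous: "smooth f \<Longrightarrow> continuous_on UNIV f"
  unfolding smooth_def by (metis Ck.simps(1))

lemma smooth_det:
  fixes M :: "real^'n::finite \<Rightarrow> real^'m::finite^'m"
  assumes "\<And>i j. smooth (\<lambda>x. M x $ i $ j)"
  shows "smooth (\<lambda>x. det (M x))"
  unfolding det_def
  by (intro smooth_sum smooth_mult smooth_const smooth_prod assms) (auto simp: finite_permutations)

section \<open>Frames and coframes\<close>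

lemma vmat_nth [simp]: "vmat e x $ i $ j = e i j x"
  by (simp add: vmat_def)

lemma matrix_inv_right: "invertible A \<Longrightarrow> A ** matrix_inv A = mat 1"
  and matrix_inv_left: "invertible A \<Longrightarrow> matrix_inv A ** A = mat 1"
  for A :: "'a::semiring_1^'n::finite^'n"
  using someI_ex[of "\<lambda>A'. A ** A' = mat 1 \<and> A' ** A = mat 1"]
  unfolding matrix_inv_def invertible_def by auto

lemma inv_frame_cramer:
  fixes e :: "'n::finite frame"
  assumes "invertible (vmat e x)"
  shows "inv_frame e a mu x =
    det (\<chi> i j. if j = mu then axis a 1 $ i else e i j x :: real^'n^'n) / det (vmat e x)"
proof -
  let ?A = "vmat e x" and ?B = "matrix_inv (vmat e x)"
  have "det ?A \<noteq> 0" using assms invertible_det_nz by blast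
  moreover have "?A *v (?B *v axis a 1) = axis a 1"
    by (simp add: matrix_vector_mul_assoc matrix_inv_right[OF assms])
  ultimately have "?B *v axis a 1
      = (\<chi> k. det (\<chi> i j. if j = k then axis a 1 $ i else ?A $ i $ j) / det ?A)"
    using cramer by blast
  moreover have "(?B *v axis a 1) $ mu = ?B $ mu $ a"
    by (simp add: matrix_vector_mult_def axis_def if_distrib cong: if_cong)
  ultimately show ?thesis
    unfolding inv_frame_def by (simp only: vmat_nth vec_lambda_beta)
qed

lemma smooth_inv_frame:
  fixes e :: "'n::finite frame"
  assumes "is_vielbein e"
  shows "smooth (inv_frame e a mu)"
proof -
  have sm: "smooth (e a mu)" for a mu using assms unfolding is_vielbein_def by blast
  have inv: "invertible (vmat e x)" for x using assms unfolding is_vielbein_def by blast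
  have cramer_form: "inv_frame e a mu = (\<lambda>x.
      det (\<chi> i j. if j = mu then axis a 1 $ i else e i j x :: real^'n^'n) * inverse (det (vmat e x)))"
    using inv_frame_cramer[OF inv] by (simp add: divide_inverse fun_eq_iff)
  show ?thesis
    unfolding cramer_form
  proof (intro smooth_mult smooth_inverse smooth_det)
    show "smooth (\<lambda>x. (\<chi> i j. if j = mu then axis a 1 $ i else e i j x :: real^'n^'n) $ i $ j)"
      for i j
      by (cases "j = mu") (simp_all add: smooth_const sm)
    show "smooth (\<lambda>x. vmat e x $ i $ j)" for i j
      by (simp add: sm)
    show "det (vmat e x) \<noteq> 0" for x
      using inv invertible_det_nz by blast
  qed
qed

lemma vielbein_differentiable: "is_vielbein e \<Longrightarrow> e a mu differentiable_on UNIV"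
  using smooth_imp_differentiable unfolding is_vielbein_def by blast

lemma smooth_dform: "(\<And>c nu. smooth (e c nu)) \<Longrightarrow> smooth (dform e c rho nu)"
  unfolding dform_def by (intro smooth_diff smooth_pd) auto

definition frame_component :: "'n::finite frame \<Rightarrow> real^'n \<Rightarrow> ('n \<Rightarrow> real) \<Rightarrow> 'n \<Rightarrow> real" where
  "frame_component e x w k = (\<Sum>mu\<in>UNIV. w mu * inv_frame e k mu x)"

context
  fixes e :: "'n::finite frame"
  assumes vielbein: "is_vielbein e"
begin

lemma sum_frame_inv_frame:
  "(\<Sum>mu\<in>UNIV. e a mu x * inv_frame e b mu x) = (if a = b then 1 else 0)"
proof -
  have "(vmat e x ** matrix_inv (vmat e x)) $ a $ b = mat 1 $ a $ b"
    using vielbein matrix_inv_right unfolding is_vielbein_def by metis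
  then show ?thesis by (simp add: matrix_matrix_mult_def mat_def inv_frame_def)
qed

lemma sum_inv_frame_frame:
  "(\<Sum>a\<in>UNIV. inv_frame e a mu x * e a nu x) = (if mu = nu then 1 else 0)"
proof -
  have "(matrix_inv (vmat e x) ** vmat e x) $ mu $ nu = mat 1 $ mu $ nu"
    using vielbein matrix_inv_left unfolding is_vielbein_def by metis
  then show ?thesis by (simp add: matrix_matrix_mult_def mat_def inv_frame_def)
qed

lemma coframe_expansion:
  "(\<Sum>k\<in>UNIV. frame_component e x w k * e k mu x) = w mu"
proof -
  have "(\<Sum>k\<in>UNIV. frame_component e x w k * e k mu x)
      = (\<Sum>nu\<in>UNIV. w nu * (\<Sum>k\<in>UNIV. inv_frame e k nu x * e k mu x))"
    unfolding frame_component_def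
    by (simp add: sum_distrib_left sum_distrib_right mult.assoc) (rule sum.swap)
  also have "\<dots> = w mu"
    by (simp add: sum_inv_frame_frame if_distrib sum.delta cong: if_cong)
  finally show ?thesis .
qed

lemma frame_component_coframe:
  "frame_component e x (\<lambda>mu. \<Sum>k\<in>UNIV. w k * e k mu x) j = w j"
proof -
  have "frame_component e x (\<lambda>mu. \<Sum>k\<in>UNIV. w k * e k mu x) j
      = (\<Sum>k\<in>UNIV. w k * (\<Sum>mu\<in>UNIV. e k mu x * inv_frame e j mu x))"
    unfolding frame_component_def
    by (simp add: sum_distrib_left sum_distrib_right mult.assoc) (rule sum.swap)
  also have "\<dots> = w j"
    by (simp add: sum_frame_inv_frame if_distrib sum.delta cong: if_cong)
  finally show ?thesis .
qed

lemma coframe_expansion2: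
  "(\<Sum>k\<in>UNIV. \<Sum>l\<in>UNIV.
      (\<Sum>rho\<in>UNIV. \<Sum>nu\<in>UNIV. inv_frame e k rho x * inv_frame e l nu x * T rho nu)
        * e k mu x * e l kappa x)
    = T mu kappa"
proof -
  have "(\<Sum>k\<in>UNIV. \<Sum>l\<in>UNIV.
      (\<Sum>rho\<in>UNIV. \<Sum>nu\<in>UNIV. inv_frame e k rho x * inv_frame e l nu x * T rho nu)
        * e k mu x * e l kappa x)
    = (\<Sum>l\<in>UNIV. (\<Sum>k\<in>UNIV. (\<Sum>rho\<in>UNIV. (\<Sum>nu\<in>UNIV. T rho nu * inv_frame e l nu x)
          * inv_frame e k rho x) * e k mu x) * e l kappa x)"
    by (subst sum.swap)
      (auto simp: sum_distrib_right sum_distrib_left mult_ac intro!: sum.cong)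
  also have "\<dots> = (\<Sum>l\<in>UNIV. (\<Sum>nu\<in>UNIV. T mu nu * inv_frame e l nu x) * e l kappa x)"
    by (simp only: coframe_expansion[unfolded frame_component_def])
  also have "\<dots> = T mu kappa"
    by (rule coframe_expansion[unfolded frame_component_def])
  finally show ?thesis .
qed

lemma frame_components_wedge:
  "(\<Sum>m\<in>UNIV. \<Sum>n\<in>UNIV. inv_frame e c m x * inv_frame e d n x * (\<Sum>b\<in>UNIV. v b m * e b n x))
    = frame_component e x (v d) c"
proof -
  have "(\<Sum>n\<in>UNIV. inv_frame e c m x * inv_frame e d n x * (\<Sum>b\<in>UNIV. v b m * e b n x))
      = inv_frame e c m x * frame_component e x (\<lambda>n. \<Sum>b\<in>UNIV. v b m * e b n x) d" for m
    unfolding frame_component_def by (simp add: sum_distrib_left mult_ac)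
  also have "\<dots> m = inv_frame e c m x * v d m" for m
    by (simp only: frame_component_coframe)
  finally show ?thesis
    by (simp add: frame_component_def mult.commute)
qed

lemma frame_components_wedge':
  "(\<Sum>m\<in>UNIV. \<Sum>n\<in>UNIV. inv_frame e c m x * inv_frame e d n x * (\<Sum>b\<in>UNIV. v b n * e b m x))
    = frame_component e x (v c) d"
proof -
  have "(\<Sum>m\<in>UNIV. inv_frame e c m x * inv_frame e d n x * (\<Sum>b\<in>UNIV. v b n * e b m x))
      = inv_frame e d n x * frame_component e x (\<lambda>m. \<Sum>b\<in>UNIV. v b n * e b m x) c" for n
    unfolding frame_component_def by (simp add: sum_distrib_left mult_ac)
  also have "\<dots> n = inv_frame e d n x * v c n" for n
    by (simp only: frame_component_coframe)
  finally show ?thesis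
    by (subst sum.swap) (simp add: frame_component_def mult.commute)
qed

end

section \<open>The Koszul formula\<close>

definition koszul_coeff :: "('n \<Rightarrow> 'n \<Rightarrow> 'n \<Rightarrow> real) \<Rightarrow> 'n \<Rightarrow> 'n \<Rightarrow> 'n \<Rightarrow> real" where
  "koszul_coeff C a b k = (C a b k - C b a k - C k a b) / 2"

lemma koszul_coeff_antisym:
  assumes "\<And>c a b. C c a b = - C c b a"
  shows "koszul_coeff C a b k = - koszul_coeff C b a k"
  using assms[of k a b] unfolding koszul_coeff_def by (simp add: field_simps)

lemma koszul_coeff_structure_eq:
  assumes "\<And>c a b. C c a b = - C c b a"
  shows "C a c d + koszul_coeff C a d c - koszul_coeff C a c d = 0"
  using assms[of a c d] unfolding koszul_coeff_def by simp

lemma koszul_coeff_unique: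
  assumes antisym: "\<And>a b k. W a b k = - W b a k"
    and structure_eq: "\<And>a c d. C a c d + W a d c - W a c d = 0"
  shows "W a b k = koszul_coeff C a b k"
proof -
  have "2 * W a b k = C a b k - C b a k - C k a b"
    using structure_eq[of k a b] structure_eq[of a b k] structure_eq[of b a k]
      antisym[of k a b] antisym[of k b a] antisym[of b a k]
    by linarith
  then show ?thesis
    unfolding koszul_coeff_def by simp
qed

definition anholonomy :: "'n::finite frame \<Rightarrow> real^'n \<Rightarrow> 'n \<Rightarrow> 'n \<Rightarrow> 'n \<Rightarrow> real" where
  "anholonomy e x c a b =
    (\<Sum>rho\<in>UNIV. \<Sum>nu\<in>UNIV. inv_frame e a rho x * inv_frame e b nu x * dform e c rho nu x)"

lemma anholonomy_antisym: "anholonomy e x c a b = - anholonomy e x c b a"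
proof -
  have "anholonomy e x c b a
      = (\<Sum>rho\<in>UNIV. \<Sum>nu\<in>UNIV. inv_frame e a rho x * inv_frame e b nu x * dform e c nu rho x)"
    unfolding anholonomy_def by (subst sum.swap) (simp add: mult_ac)
  then have "anholonomy e x c a b + anholonomy e x c b a
      = (\<Sum>rho\<in>UNIV. \<Sum>nu\<in>UNIV. inv_frame e a rho x * inv_frame e b nu x *
          (dform e c rho nu x + dform e c nu rho x))"
    unfolding anholonomy_def by (simp add: sum.distrib distrib_left)
  also have "\<dots> = 0"
    by (simp add: dform_def)
  finally show ?thesis
    by linarith
qed

context
  fixes e :: "'n::finite frame"
  assumes vielbein: "is_vielbein e"
begin

lemma omega_of_koszul:
  "omega_of e a b mu x = (\<Sum>k\<in>UNIV. koszul_coeff (anholonomy e x) a b k * e k mu x)"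
proof -
  let ?C = "anholonomy e x"
  have first: "(\<Sum>c\<in>UNIV. e c mu x * (\<Sum>nu\<in>UNIV. \<Sum>rho\<in>UNIV.
      inv_frame e b nu x * inv_frame e a rho x * dform e c rho nu x))
    = (\<Sum>k\<in>UNIV. ?C k a b * e k mu x)"
    unfolding anholonomy_def
    by (rule sum.cong[OF refl], subst sum.swap)
      (simp add: sum_distrib_right sum_distrib_left mult_ac)
  have last: "(\<Sum>nu\<in>UNIV. inv_frame e b nu x * dform e a nu mu x)
    = (\<Sum>k\<in>UNIV. ?C a b k * e k mu x)" for a b
  proof -
    let ?w = "\<lambda>nu. \<Sum>rho\<in>UNIV. inv_frame e b rho x * dform e a rho nu x"
    have "?C a b k = frame_component e x ?w k" for k
    proof -
      have "?C a b k
          = (\<Sum>nu\<in>UNIV. \<Sum>rho\<in>UNIV. inv_frame e b rho x * dform e a rho nu x * inv_frame e k nu x)"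
        unfolding anholonomy_def by (subst sum.swap) (simp add: mult_ac)
      also have "\<dots> = frame_component e x ?w k"
        by (simp add: frame_component_def sum_distrib_right)
      finally show ?thesis .
    qed
    then show ?thesis
      by (simp add: coframe_expansion[OF vielbein])
  qed
  have "omega_of e a b mu x
      = ((\<Sum>k\<in>UNIV. ?C a b k * e k mu x) - (\<Sum>k\<in>UNIV. ?C b a k * e k mu x)
         - (\<Sum>k\<in>UNIV. ?C k a b * e k mu x)) / 2"
    unfolding omega_of_def first last by simp
  also have "\<dots> = (\<Sum>k\<in>UNIV. koszul_coeff ?C a b k * e k mu x)"
    by (simp add: koszul_coeff_def left_diff_distrib sum_subtractf sum_divide_distrib[symmetric])
  finally show ?thesis .
qed

lemma torsion_frame_components:
  "(\<Sum>m\<in>UNIV. \<Sum>n\<in>UNIV. inv_frame e c m x * inv_frame e d n x *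
      (dform e a m n x + (\<Sum>b\<in>UNIV. w a b m * e b n x - w a b n * e b m x)))
    = anholonomy e x a c d + frame_component e x (w a d) c - frame_component e x (w a c) d"
  unfolding frame_components_wedge[OF vielbein, where v = "w a" and c = c and d = d, symmetric]
    frame_components_wedge'[OF vielbein, where v = "w a" and c = c and d = d, symmetric]
        anholonomy_def
  by (simp add: ring_distribs sum.distrib sum_subtractf)

lemma omega_of_antisym: "omega_of e a b mu x = - omega_of e b a mu x"
  unfolding omega_of_koszul
  by (subst koszul_coeff_antisym[OF anholonomy_antisym]) (simp add: sum_negf)

lemma frame_component_omega_of:
  "frame_component e x (\<lambda>mu. omega_of e a b mu x) k = koszul_coeff (anholonomy e x) a b k"
  unfolding omega_of_koszul by (rule frame_component_coframe[OF vielbein])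

lemma omega_of_torsionless: "torsionless (omega_of e) e"
  unfolding torsionless_def
proof (intro allI)
  fix a mu nu x
  define T where "T m n = dform e a m n x +
      (\<Sum>b\<in>UNIV. omega_of e a b m x * e b n x - omega_of e a b n x * e b m x)" for m n
  have "(\<Sum>m\<in>UNIV. \<Sum>n\<in>UNIV. inv_frame e k m x * inv_frame e l n x * T m n) = 0" for k l
    unfolding T_def
    using torsion_frame_components[where x = x and c = k and d = l
        and w = "\<lambda>a b m. omega_of e a b m x"]
      koszul_coeff_structure_eq[of "anholonomy e x" a k l, OF anholonomy_antisym]
    by (simp add: frame_component_omega_of)
  then have "T mu nu = 0"
    using coframe_expansion2[OF vielbein, where x = x and T = T and mu = mu and kappa = nu] by simp
  then show "dform e a mu nu x +
      (\<Sum>b\<in>UNIV. omega_of e a b mu x * e b nu x - omega_of e a b nu x * e b mu x) = 0"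
    by (simp add: T_def)
qed

lemma torsionless_imp_eq_omega_of:
  assumes antisym: "\<And>a b mu x. \<omega> a b mu x = - \<omega> b a mu x"
    and torsionless: "torsionless \<omega> e"
  shows "\<omega> = omega_of e"
proof (intro ext)
  fix a b mu x
  define W where "W a b = frame_component e x (\<lambda>mu. \<omega> a b mu x)" for a b
  have "W a b k = - W b a k" for a b k
    unfolding W_def frame_component_def by (simp add: antisym[of a b] sum_negf)
  moreover have "anholonomy e x a c d + W a d c - W a c d = 0" for a c d
    using torsion_frame_components[where x = x and w = "\<lambda>a b m. \<omega> a b m x"] torsionless
    unfolding W_def torsionless_def by simp
  ultimately have "W a b k = koszul_coeff (anholonomy e x) a b k" for k
    by (rule koszul_coeff_unique)
  then show "\<omega> a b mu x = omega_of e a b mu x"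
    using coframe_expansion[OF vielbein, of x "\<lambda>mu. \<omega> a b mu x" mu]
    unfolding omega_of_koszul W_def by simp
qed

end

lemma smooth_omega_of:
  assumes vielbein: "is_vielbein e"
  shows "smooth (omega_of e a b mu)"
proof -
  have "smooth (e a mu)" for a mu
    using vielbein unfolding is_vielbein_def by blast
  then show ?thesis
    unfolding omega_of_def[abs_def]
    by (intro smooth_mult smooth_const smooth_diff smooth_add smooth_uminus smooth_sum finite_UNIV
        smooth_inv_frame[OF vielbein] smooth_dform) simp_all
qed

section \<open>Radial identities\<close>

lemma pd_contraction_identity:
  fixes g :: "'n::finite \<Rightarrow> real^'n \<Rightarrow> real"
  assumes diff: "\<And>k. g k differentiable_on UNIV"
    and contraction: "\<And>y. (\<Sum>k\<in>UNIV. y $ k * g k y) = y $ j"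
  shows "(\<Sum>k\<in>UNIV. x $ k * pd i (g k) x) + g i x = (if j = i then 1 else 0)"
proof -
  let ?g' = "\<lambda>k. frechet_derivative (g k) (at x)"
  have nth: "((\<lambda>y. y $ k) has_derivative (\<lambda>h. h $ k)) (at x)" for k :: 'n
    by (rule bounded_linear_imp_has_derivative) (rule bounded_linear_vec_nth)
  have "((\<lambda>y. \<Sum>k\<in>UNIV. y $ k * g k y) has_derivative
      (\<lambda>h. \<Sum>k\<in>UNIV. x $ k * ?g' k h + h $ k * g k x)) (at x)"
    by (intro has_derivative_sum has_derivative_mult nth differentiable_on_UNIV_has_derivative diff)
  then have "((\<lambda>y. y $ j) has_derivative (\<lambda>h. \<Sum>k\<in>UNIV. x $ k * ?g' k h + h $ k * g k x)) (at x)"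
    by (simp only: contraction)
  from this nth[of j] have "(\<lambda>h. \<Sum>k\<in>UNIV. x $ k * ?g' k h + h $ k * g k x) = (\<lambda>h. h $ j)"
    by (rule has_derivative_unique)
  then have "(\<Sum>k\<in>UNIV. x $ k * ?g' k (axis i 1) + axis i 1 $ k * g k x) = axis i 1 $ j"
    by (rule fun_cong)
  moreover have "axis i 1 $ k * g k x = (if k = i then g i x else 0)" for k
    by (simp add: axis_def)
  ultimately show ?thesis
    by (simp add: sum.distrib pd_def axis_def)
qed

lemma lie_r_cartan:
  assumes diff: "\<And>k. e a k differentiable_on UNIV"
    and radial: "\<And>y. (\<Sum>mu\<in>UNIV. y $ mu * e a mu y) = y $ a"
  shows "lie_r e a mu x = (\<Sum>nu\<in>UNIV. x $ nu * dform e a nu mu x) + (if a = mu then 1 else 0)"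
  using pd_contraction_identity[of "e a" a x mu, OF diff radial]
  by (simp add: lie_r_def dform_def right_diff_distrib sum_subtractf)

lemma dform_radial_contraction:
  assumes diff: "\<And>c nu. e c nu differentiable_on UNIV"
    and radial: "\<And>mu y. (\<Sum>a\<in>UNIV. y $ a * e a mu y) = y $ mu"
  shows "(\<Sum>c\<in>UNIV. x $ c * dform e c rho nu x) = e nu rho x - e rho nu x"
  using pd_contraction_identity[of "\<lambda>c. e c nu" nu x rho, OF diff radial]
    pd_contraction_identity[of "\<lambda>c. e c rho" rho x nu, OF diff radial]
  by (simp add: dform_def right_diff_distrib sum_subtractf eq_commute)

lemma lie_r_has_integral:
  assumes diff: "e a mu differentiable_on UNIV"
  shows "((\<lambda>t. lie_r e a mu (t *\<^sub>R x)) has_integral e a mu x) {0..1}"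
proof -
  let ?f = "e a mu"
  have "((\<lambda>t. t * ?f (t *\<^sub>R x)) has_vector_derivative lie_r e a mu (t *\<^sub>R x)) (at t within {0..1})"
    for t
  proof -
    let ?D = "frechet_derivative ?f (at (t *\<^sub>R x))"
    have fd: "(?f has_derivative ?D) (at (t *\<^sub>R x))"
      by (rule differentiable_on_UNIV_has_derivative[OF diff])
    have "((\<lambda>s::real. s *\<^sub>R x) has_derivative (\<lambda>s. s *\<^sub>R x)) (at t within {0..1})"
      by (intro bounded_linear_imp_has_derivative bounded_linear_scaleR_left)
    from has_derivative_compose[OF this fd]
    have "((\<lambda>s. s * ?f (s *\<^sub>R x)) has_derivative (\<lambda>s. t * ?D (s *\<^sub>R x) + s * ?f (t *\<^sub>R x)))
        (at t within {0..1})"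
      by (intro has_derivative_mult has_derivative_ident)
    moreover have "t * ?D (s *\<^sub>R x) + s * ?f (t *\<^sub>R x) = s * lie_r e a mu (t *\<^sub>R x)" for s
      using has_derivative_eq_sum_pd[OF fd, of "s *\<^sub>R (t *\<^sub>R x)"]
        linear_cmul[OF has_derivative_linear[OF fd]]
      by (simp add: lie_r_def sum_distrib_left algebra_simps)
    ultimately show ?thesis
      unfolding has_vector_derivative_def by (simp add: mult.commute)
  qed
  then have "((\<lambda>t. lie_r e a mu (t *\<^sub>R x))
      has_integral (1 * ?f (1 *\<^sub>R x) - 0 * ?f (0 *\<^sub>R x))) {0..1}"
    by (intro fundamental_theorem_of_calculus) auto
  then show ?thesis by simp
qed

lemma torsion_radial_contraction:
  assumes torsionless: "torsionless \<omega> e" and gauge: "FS_gauge \<omega>"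
    and radial: "\<And>a y. (\<Sum>mu\<in>UNIV. y $ mu * e a mu y) = y $ a"
  shows "(\<Sum>nu\<in>UNIV. x $ nu * dform e a nu mu x) = (\<Sum>b\<in>UNIV. \<omega> a b mu x * x $ b)"
proof -
  have "(\<Sum>nu\<in>UNIV. x $ nu * dform e a nu mu x)
      = (\<Sum>nu\<in>UNIV. \<Sum>b\<in>UNIV. x $ nu * \<omega> a b mu x * e b nu x - x $ nu * \<omega> a b nu x * e b mu x)"
  proof (rule sum.cong[OF refl])
    fix nu
    have "dform e a nu mu x = (\<Sum>b\<in>UNIV. \<omega> a b mu x * e b nu x - \<omega> a b nu x * e b mu x)"
    proof -
      have "dform e a nu mu x + (\<Sum>b\<in>UNIV. \<omega> a b nu x * e b mu x - \<omega> a b mu x * e b nu x) = 0"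
        using torsionless unfolding torsionless_def by blast
      then show ?thesis
        unfolding sum_subtractf by linarith
    qed
    then show "x $ nu * dform e a nu mu x
        = (\<Sum>b\<in>UNIV. x $ nu * \<omega> a b mu x * e b nu x - x $ nu * \<omega> a b nu x * e b mu x)"
      by (simp add: sum_distrib_left right_diff_distrib mult_ac)
  qed
  also have "\<dots> = (\<Sum>b\<in>UNIV. \<Sum>nu\<in>UNIV.
      x $ nu * \<omega> a b mu x * e b nu x - x $ nu * \<omega> a b nu x * e b mu x)"
    by (rule sum.swap)
  also have "\<dots> = (\<Sum>b\<in>UNIV. \<omega> a b mu x * (\<Sum>nu\<in>UNIV. x $ nu * e b nu x)
      - (\<Sum>nu\<in>UNIV. x $ nu * \<omega> a b nu x) * e b mu x)"
    by (simp add: sum_subtractf sum_distrib_left sum_distrib_right mult_ac)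
  also have "\<dots> = (\<Sum>b\<in>UNIV. \<omega> a b mu x * x $ b)"
    using gauge unfolding FS_gauge_def by (simp add: radial)
  finally show ?thesis .
qed

lemma anholonomy_contract_first:
  fixes e :: "'n::finite frame"
  assumes vielbein: "is_vielbein e"
    and radial': "\<And>mu y. (\<Sum>a\<in>UNIV. y $ a * e a mu y) = y $ mu"
  shows "(\<Sum>k\<in>UNIV. x $ k * anholonomy e x k a b) = inv_frame e b a x - inv_frame e a b x"
proof -
  let ?F = "\<lambda>a mu. inv_frame e a mu x"
  have "(\<Sum>k\<in>UNIV. x $ k * anholonomy e x k a b)
      = (\<Sum>k\<in>UNIV. \<Sum>rho\<in>UNIV. \<Sum>nu\<in>UNIV. x $ k * (?F a rho * ?F b nu * dform e k rho nu x))"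
    by (simp add: anholonomy_def sum_distrib_left)
  also have "\<dots> = (\<Sum>rho\<in>UNIV. \<Sum>nu\<in>UNIV. ?F a rho * ?F b nu * (\<Sum>k\<in>UNIV. x $ k * dform e k rho nu x))"
    by (subst sum_swap3) (simp add: sum_distrib_left mult_ac)
  also have "\<dots> = (\<Sum>rho\<in>UNIV. \<Sum>nu\<in>UNIV. ?F a rho * ?F b nu * e nu rho x)
      - (\<Sum>rho\<in>UNIV. \<Sum>nu\<in>UNIV. ?F a rho * ?F b nu * e rho nu x)"
    by (simp add: dform_radial_contraction[OF vielbein_differentiable[OF vielbein] radial']
        right_diff_distrib sum_subtractf)
  also have "(\<Sum>rho\<in>UNIV. \<Sum>nu\<in>UNIV. ?F a rho * ?F b nu * e nu rho x) = ?F b a"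
  proof -
    have "(\<Sum>rho\<in>UNIV. \<Sum>nu\<in>UNIV. ?F a rho * ?F b nu * e nu rho x)
        = (\<Sum>nu\<in>UNIV. ?F b nu * (\<Sum>rho\<in>UNIV. e nu rho x * ?F a rho))"
      by (subst sum.swap) (simp add: sum_distrib_left mult_ac)
    then show ?thesis
      by (simp add: sum_frame_inv_frame[OF vielbein] if_distrib sum.delta cong: if_cong)
  qed
  also have "(\<Sum>rho\<in>UNIV. \<Sum>nu\<in>UNIV. ?F a rho * ?F b nu * e rho nu x) = ?F a b"
  proof -
    have "(\<Sum>rho\<in>UNIV. \<Sum>nu\<in>UNIV. ?F a rho * ?F b nu * e rho nu x)
        = (\<Sum>rho\<in>UNIV. ?F a rho * (\<Sum>nu\<in>UNIV. e rho nu x * ?F b nu))"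
      by (simp add: sum_distrib_left mult_ac)
    then show ?thesis
      by (simp add: sum_frame_inv_frame[OF vielbein] if_distrib sum.delta cong: if_cong)
  qed
  finally show ?thesis .
qed

lemma radial_inv_frame:
  fixes e :: "'n::finite frame"
  assumes vielbein: "is_vielbein e"
    and radial: "\<And>a y. (\<Sum>mu\<in>UNIV. y $ mu * e a mu y) = y $ a"
  shows "(\<Sum>k\<in>UNIV. x $ k * inv_frame e k nu x) = x $ nu"
proof -
  have "(\<Sum>k\<in>UNIV. x $ k * inv_frame e k nu x)
      = (\<Sum>k\<in>UNIV. (\<Sum>mu\<in>UNIV. x $ mu * e k mu x) * inv_frame e k nu x)"
    by (simp only: radial)
  also have "\<dots> = (\<Sum>k\<in>UNIV. \<Sum>mu\<in>UNIV. x $ mu * (inv_frame e k nu x * e k mu x))"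
    by (simp add: sum_distrib_left sum_distrib_right mult_ac)
  also have "\<dots> = (\<Sum>mu\<in>UNIV. x $ mu * (\<Sum>k\<in>UNIV. inv_frame e k nu x * e k mu x))"
    by (subst sum.swap) (simp add: sum_distrib_left)
  also have "\<dots> = x $ nu"
    by (simp add: sum_inv_frame_frame[OF vielbein] if_distrib sum.delta cong: if_cong)
  finally show ?thesis .
qed

lemma anholonomy_contract_last:
  fixes e :: "'n::finite frame"
  assumes vielbein: "is_vielbein e"
    and radial: "\<And>a y. (\<Sum>mu\<in>UNIV. y $ mu * e a mu y) = y $ a"
  shows "(\<Sum>k\<in>UNIV. x $ k * anholonomy e x a b k) = inv_frame e b a x - iL e b a x"
proof -
  let ?F = "\<lambda>a mu. inv_frame e a mu x"
  have "(\<Sum>k\<in>UNIV. x $ k * anholonomy e x a b k)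
      = (\<Sum>k\<in>UNIV. \<Sum>rho\<in>UNIV. \<Sum>nu\<in>UNIV. ?F b rho * dform e a rho nu x * (x $ k * ?F k nu))"
    by (simp add: anholonomy_def sum_distrib_right sum_distrib_left mult_ac)
  also have "\<dots> = (\<Sum>rho\<in>UNIV. \<Sum>nu\<in>UNIV.
      (\<Sum>k\<in>UNIV. x $ k * ?F k nu) * (?F b rho * dform e a rho nu x))"
    by (subst sum_swap3) (simp add: sum_distrib_left sum_distrib_right mult_ac)
  also have "\<dots> = (\<Sum>rho\<in>UNIV. ?F b rho * (\<Sum>nu\<in>UNIV. x $ nu * dform e a rho nu x))"
    by (simp add: radial_inv_frame[OF vielbein radial] sum_distrib_left mult_ac)
  also have "\<dots> = (\<Sum>rho\<in>UNIV. ?F b rho * ((if a = rho then 1 else 0) - lie_r e a rho x))"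
    using lie_r_cartan[of e a, OF vielbein_differentiable[OF vielbein] radial]
    by (simp add: dform_def right_diff_distrib sum_subtractf)
  also have "\<dots> = inv_frame e b a x - iL e b a x"
  proof -
    have "(\<Sum>rho\<in>UNIV. ?F b rho * (if a = rho then 1 else 0)) = ?F b a"
      by (simp add: if_distrib sum.delta cong: if_cong)
    then show ?thesis
      by (simp add: iL_def right_diff_distrib sum_subtractf)
  qed
  finally show ?thesis .
qed

lemma radial_contraction_omega_of:
  fixes e :: "'n::finite frame"
  assumes vielbein: "is_vielbein e"
    and radial: "\<And>a y. (\<Sum>mu\<in>UNIV. y $ mu * e a mu y) = y $ a"
    and radial': "\<And>mu y. (\<Sum>a\<in>UNIV. y $ a * e a mu y) = y $ mu"
  shows "2 * (\<Sum>mu\<in>UNIV. x $ mu * omega_of e a b mu x) = iL e a b x - iL e b a x"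
proof -
  let ?C = "anholonomy e x"
  have "(\<Sum>mu\<in>UNIV. x $ mu * omega_of e a b mu x)
      = (\<Sum>mu\<in>UNIV. \<Sum>k\<in>UNIV. koszul_coeff ?C a b k * (x $ mu * e k mu x))"
    by (simp add: omega_of_koszul[OF vielbein] sum_distrib_left mult_ac)
  also have "\<dots> = (\<Sum>k\<in>UNIV. koszul_coeff ?C a b k * (\<Sum>mu\<in>UNIV. x $ mu * e k mu x))"
    by (subst sum.swap) (simp add: sum_distrib_left)
  finally have "2 * (\<Sum>mu\<in>UNIV. x $ mu * omega_of e a b mu x)
      = (\<Sum>k\<in>UNIV. (?C a b k - ?C b a k - ?C k a b) * x $ k)"
    by (simp add: radial koszul_coeff_def sum_distrib_left)
  also have "\<dots> = (\<Sum>k\<in>UNIV. x $ k * ?C a b k) - (\<Sum>k\<in>UNIV. x $ k * ?C b a k)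
      - (\<Sum>k\<in>UNIV. x $ k * ?C k a b)"
    by (simp add: right_diff_distrib sum_subtractf mult.commute)
  also have "\<dots> = iL e a b x - iL e b a x"
    by (simp add: anholonomy_contract_first[OF vielbein radial']
        anholonomy_contract_last[OF vielbein radial])
  finally show ?thesis .
qed

section \<open>The two maps\<close>

context
  fixes \<omega> :: "'n::finite conn"
  assumes spin: "spin_connection \<omega>"
begin

lemma e_of_integrand_continuous:
  "continuous_on {0..1} (\<lambda>t. \<Sum>b\<in>UNIV. \<omega> a b mu (t *\<^sub>R x) * t * x $ b)"
proof -
  have "continuous_on UNIV (\<omega> a b mu)" for b
    using spin smooth_imp_continuous unfolding spin_connection_def by blast
  then have "continuous_on {0..1} (\<lambda>t. \<omega> a b mu (t *\<^sub>R x))" for b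
    by (rule continuous_on_compose2) (auto intro: continuous_intros)
  then show ?thesis
    by (intro continuous_on_sum continuous_on_mult continuous_on_id continuous_on_const)
qed

lemma e_of_radial':
  "(\<Sum>a\<in>UNIV. x $ a * e_of \<omega> a mu x) = x $ mu"
proof -
  have "(\<Sum>a\<in>UNIV. x $ a * e_of \<omega> a mu x)
      = x $ mu + integral {0..1} (\<lambda>t. \<Sum>a\<in>UNIV. x $ a * (\<Sum>b\<in>UNIV. \<omega> a b mu (t *\<^sub>R x) * t * x $ b))"
    unfolding e_of_def
    by (simp add: ring_distribs sum.distrib sum_mult_integral e_of_integrand_continuous
        sum_mult_delta)
  also have "(\<lambda>t. \<Sum>a\<in>UNIV. x $ a * (\<Sum>b\<in>UNIV. \<omega> a b mu (t *\<^sub>R x) * t * x $ b)) = (\<lambda>t. 0)"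
  proof
    fix t
    have "\<omega> a b mu (t *\<^sub>R x) = - \<omega> b a mu (t *\<^sub>R x)" for a b
      using spin unfolding spin_connection_def by blast
    then have "(\<Sum>a\<in>UNIV. \<Sum>b\<in>UNIV. x $ a * x $ b * \<omega> a b mu (t *\<^sub>R x)) = 0"
      by (rule sum_antisym_quadratic)
    moreover have "(\<Sum>a\<in>UNIV. x $ a * (\<Sum>b\<in>UNIV. \<omega> a b mu (t *\<^sub>R x) * t * x $ b))
        = t * (\<Sum>a\<in>UNIV. \<Sum>b\<in>UNIV. x $ a * x $ b * \<omega> a b mu (t *\<^sub>R x))"
      by (simp add: sum_distrib_left mult_ac)
    ultimately show "(\<Sum>a\<in>UNIV. x $ a * (\<Sum>b\<in>UNIV. \<omega> a b mu (t *\<^sub>R x) * t * x $ b)) = 0"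
      by simp
  qed
  finally show ?thesis
    by simp
qed

lemma e_of_radial:
  assumes gauge: "FS_gauge \<omega>"
  shows "(\<Sum>mu\<in>UNIV. x $ mu * e_of \<omega> a mu x) = x $ a"
proof -
  have "(\<Sum>mu\<in>UNIV. x $ mu * e_of \<omega> a mu x)
      = x $ a + integral {0..1} (\<lambda>t. \<Sum>mu\<in>UNIV. x $ mu * (\<Sum>b\<in>UNIV. \<omega> a b mu (t *\<^sub>R x) * t * x $ b))"
    unfolding e_of_def
    by (simp add: ring_distribs sum.distrib sum_mult_integral e_of_integrand_continuous
        sum_mult_delta')
  also have "(\<lambda>t. \<Sum>mu\<in>UNIV. x $ mu * (\<Sum>b\<in>UNIV. \<omega> a b mu (t *\<^sub>R x) * t * x $ b)) = (\<lambda>t. 0)"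
  proof
    fix t
    have "(\<Sum>mu\<in>UNIV. x $ mu * (\<Sum>b\<in>UNIV. \<omega> a b mu (t *\<^sub>R x) * t * x $ b))
        = (\<Sum>mu\<in>UNIV. \<Sum>b\<in>UNIV. x $ b * ((t *\<^sub>R x) $ mu * \<omega> a b mu (t *\<^sub>R x)))"
      by (simp add: sum_distrib_left mult_ac)
    also have "\<dots> = (\<Sum>b\<in>UNIV. \<Sum>mu\<in>UNIV. x $ b * ((t *\<^sub>R x) $ mu * \<omega> a b mu (t *\<^sub>R x)))"
      by (rule sum.swap)
    also have "\<dots> = (\<Sum>b\<in>UNIV. x $ b * (\<Sum>mu\<in>UNIV. (t *\<^sub>R x) $ mu * \<omega> a b mu (t *\<^sub>R x)))"
      by (simp add: sum_distrib_left)
    moreover have "(\<Sum>mu\<in>UNIV. (t *\<^sub>R x) $ mu * \<omega> a b mu (t *\<^sub>R x)) = 0" for b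
      using gauge unfolding FS_gauge_def by blast
    ultimately show "(\<Sum>mu\<in>UNIV. x $ mu * (\<Sum>b\<in>UNIV. \<omega> a b mu (t *\<^sub>R x) * t * x $ b)) = 0"
      by simp
  qed
  finally show ?thesis
    by simp
qed

end

lemma e_of_eq_frame:
  fixes e :: "'n::finite frame"
  assumes diff: "\<And>a mu. e a mu differentiable_on UNIV"
    and torsionless: "torsionless \<omega> e" and gauge: "FS_gauge \<omega>"
    and radial: "\<And>a y. (\<Sum>mu\<in>UNIV. y $ mu * e a mu y) = y $ a"
  shows "e_of \<omega> = e"
proof (intro ext)
  fix a mu :: 'n and x
  let ?\<delta> = "if a = mu then 1 else 0 :: real"
  have "lie_r e a mu (t *\<^sub>R x) = ?\<delta> + (\<Sum>b\<in>UNIV. \<omega> a b mu (t *\<^sub>R x) * t * x $ b)" for t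
    using lie_r_cartan[of e a, OF diff radial]
      torsion_radial_contraction[OF torsionless gauge radial]
    by (simp add: mult.assoc)
  then have "((\<lambda>t. ?\<delta> + (\<Sum>b\<in>UNIV. \<omega> a b mu (t *\<^sub>R x) * t * x $ b)) has_integral e a mu x) {0..1}"
    using lie_r_has_integral[of e a mu x, OF diff] by simp
  from has_integral_diff[OF this has_integral_const_real[of ?\<delta> 0 1]]
  have "integral {0..1} (\<lambda>t. \<Sum>b\<in>UNIV. \<omega> a b mu (t *\<^sub>R x) * t * x $ b) = e a mu x - ?\<delta>"
    by (simp add: integral_unique)
  then show "e_of \<omega> a mu x = e a mu x"
    by (simp add: e_of_def)
qed

lemma space_i_imp_space_ii:
  assumes "space_i \<omega>"
  shows "space_ii (e_of \<omega>)" and "omega_of (e_of \<omega>) = \<omega>"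
proof -
  have spin: "spin_connection \<omega>" and gauge: "FS_gauge \<omega>"
    and vielbein: "is_vielbein (e_of \<omega>)" and torsionless: "torsionless \<omega> (e_of \<omega>)"
    using assms unfolding space_i_def by blast+
  have antisym: "\<And>a b mu x. \<omega> a b mu x = - \<omega> b a mu x"
    using spin unfolding spin_connection_def by blast
  show omega: "omega_of (e_of \<omega>) = \<omega>"
    using torsionless_imp_eq_omega_of[OF vielbein antisym torsionless] by simp
  have radial: "\<And>a y. (\<Sum>mu\<in>UNIV. y $ mu * e_of \<omega> a mu y) = y $ a"
    by (rule e_of_radial[OF spin gauge])
  have radial': "\<And>mu y. (\<Sum>a\<in>UNIV. y $ a * e_of \<omega> a mu y) = y $ mu"
    by (rule e_of_radial'[OF spin])
  have "iL (e_of \<omega>) a b x = iL (e_of \<omega>) b a x" for a b x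
    using radial_contraction_omega_of[OF vielbein radial radial', of x a b] gauge
    unfolding omega FS_gauge_def by simp
  with vielbein radial radial' show "space_ii (e_of \<omega>)"
    unfolding space_ii_def by blast
qed

lemma space_ii_imp_space_i:
  assumes "space_ii e"
  shows "space_i (omega_of e)" and "e_of (omega_of e) = e"
proof -
  have vielbein: "is_vielbein e"
    and radial: "\<And>a y. (\<Sum>mu\<in>UNIV. y $ mu * e a mu y) = y $ a"
    and radial': "\<And>mu y. (\<Sum>a\<in>UNIV. y $ a * e a mu y) = y $ mu"
    and symmetric: "\<And>a b x. iL e a b x = iL e b a x"
    using assms unfolding space_ii_def by blast+
  have spin: "spin_connection (omega_of e)"
    unfolding spin_connection_def
    using smooth_omega_of[OF vielbein] omega_of_antisym[OF vielbein] by blast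
  have gauge: "FS_gauge (omega_of e)"
    unfolding FS_gauge_def
    using radial_contraction_omega_of[OF vielbein radial radial'] symmetric by simp
  have torsionless: "torsionless (omega_of e) e"
    by (rule omega_of_torsionless[OF vielbein])
  show eq: "e_of (omega_of e) = e"
    by (rule e_of_eq_frame[OF vielbein_differentiable[OF vielbein] torsionless gauge radial])
  show "space_i (omega_of e)"
    unfolding space_i_def eq using spin gauge vielbein torsionless by blast
qed

theorem theorem2:
  shows "(\<forall>\<omega> :: 'n::finite conn. space_i \<omega> \<longrightarrow>
            space_ii (e_of \<omega>) \<and> omega_of (e_of \<omega>) = \<omega>) \<and>
         (\<forall>e :: 'n frame. space_ii e \<longrightarrow>
            space_i (omega_of e) \<and> e_of (omega_of e) = e)"
  using space_i_imp_space_ii space_ii_imp_space_i by blast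

end
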